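(* Let $k\ge 5$ and let $G=(V,E)$ be the cycle graph of the cycle $C=(v_0,\ldots,v_{k-1})$, i.e. $V=V(C)$ and $E=\textnormal{ext}(C)$. Then the inequality $$\sum_{f\in\{\{v_i,v_j\}\in E^c:\ d_C(v_i,v_j)=2\}}x_f\ \ge\ 2$$ is valid and facet-defining for $\textnormal{conv}(X(G))$.
   Context: $\textnormal{ext}(C)=\{\{v_{i-1},v_i\}\}_{i=1}^{k-1}\cup\{\{v_{k-1},v_0\}\}$, $E^c=\binom{V}{2}\setminus E$. For $i<j$, $d_C(v_i,v_j)=\min\{j-i,\,k-j+i\}$, and $d_C(v_j,v_i)=d_C(v_i,v_j)$. For $x\in\{0,1\}^{E^c}$, $E(x)=\{f:x_f=1\}$ and $X(G)=\{x\in\{0,1\}^{E^c}:(V,E\cup E(x))\text{ is chordal}\}$; a graph is chordal if every cycle with at least four vertices has a chord. *)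

theory Defs
  imports Complex_Main
begin

text \<open>Graphs: vertex set V, edge set F given as a set of 2-element vertex sets.\<close>

definition is_graph_cycle :: "'a set \<Rightarrow> 'a set set \<Rightarrow> 'a list \<Rightarrow> bool" where
  "is_graph_cycle V F cs \<longleftrightarrow> distinct cs \<and> set cs \<subseteq> V \<and> length cs \<ge> 3 \<and>
     (\<forall>i < length cs. {cs ! i, cs ! ((i + 1) mod length cs)} \<in> F)"

definition has_chord :: "'a set set \<Rightarrow> 'a list \<Rightarrow> bool" where
  "has_chord F cs \<longleftrightarrow> (\<exists>i < length cs. \<exists>j < length cs. i \<noteq> j \<and>
     j \<noteq> (i + 1) mod length cs \<and> i \<noteq> (j + 1) mod length cs \<and> {cs ! i, cs ! j} \<in> F)"

definition chordal :: "'a set \<Rightarrow> 'a set set \<Rightarrow> bool" where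
  "chordal V F \<longleftrightarrow> (\<forall>cs. is_graph_cycle V F cs \<and> length cs \<ge> 4 \<longrightarrow> has_chord F cs)"

text \<open>The cycle C = (v_0,...,v_{k-1}) with v_i = i.\<close>

definition cyc_V :: "nat \<Rightarrow> nat set" where
  "cyc_V k = {0..<k}"

definition cyc_E :: "nat \<Rightarrow> nat set set" where
  "cyc_E k = {{i - 1, i} | i. 1 \<le> i \<and> i \<le> k - 1} \<union> {{k - 1, 0}}"

definition nonedges :: "nat set \<Rightarrow> nat set set \<Rightarrow> nat set set" where
  "nonedges V F = {{u, v} | u v. u \<in> V \<and> v \<in> V \<and> u \<noteq> v} - F"

definition dC :: "nat \<Rightarrow> nat \<Rightarrow> nat \<Rightarrow> nat" where
  "dC k i j = (if i < j then min (j - i) (k - j + i) else min (i - j) (k - i + j))"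

text \<open>Points of R^{E^c} are represented as functions on 2-sets vanishing outside E^c.\<close>

definition X_set :: "nat set \<Rightarrow> nat set set \<Rightarrow> (nat set \<Rightarrow> real) set" where
  "X_set V F = {x. (\<forall>f \<in> nonedges V F. x f \<in> {0, 1}) \<and> (\<forall>f. f \<notin> nonedges V F \<longrightarrow> x f = 0)
      \<and> chordal V (F \<union> {f \<in> nonedges V F. x f = 1})}"

definition conv :: "('e \<Rightarrow> real) set \<Rightarrow> ('e \<Rightarrow> real) set" where
  "conv S = {y. \<exists>T c. finite T \<and> T \<subseteq> S \<and> T \<noteq> {} \<and> (\<forall>x\<in>T. c x \<ge> 0) \<and> sum c T = 1
                 \<and> y = (\<lambda>f. \<Sum>x\<in>T. c x * x f)}"

definition aff_indep :: "('e \<Rightarrow> real) set \<Rightarrow> bool" where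
  "aff_indep T \<longleftrightarrow> finite T \<and> (\<forall>c. sum c T = 0 \<and> (\<forall>f. (\<Sum>x\<in>T. c x * x f) = 0) \<longrightarrow> (\<forall>x\<in>T. c x = 0))"

definition adim :: "('e \<Rightarrow> real) set \<Rightarrow> int" where
  "adim S = int (GREATEST n. \<exists>T \<subseteq> S. aff_indep T \<and> card T = n) - 1"

end

theory Submission
  imports Defs "HOL-Library.Indicator_Function"
begin

text \<open>Validity: a chordal supergraph \<open>H\<close> of \<open>C\<close> has a chord \<open>{i, j}\<close>, which cuts \<open>C\<close> into two
  arcs. Each arc closed up by the chord is a cycle of \<open>H\<close>, so it has a chord, which closes a
  strictly shorter arc; descending, \<open>H\<close> contains a chord \<open>{t, t + 2}\<close> inside each of the two
  arcs, and these two short chords are distinct.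

  Facet: the complete graph and the complete graph minus any single edge are chordal, so no
  nontrivial affine equation holds on \<open>X(G)\<close> and \<open>conv X(G)\<close> is full-dimensional in
  \<open>\<real>^(E^c)\<close>. On the face, test with rotated "double fans": two fans triangulating the two sides of
  a chord \<open>{1, L + 1}\<close>, which have exactly two short chords. Adding one further long chord
  keeps the graph chordal and on the face, so an equation valid on the face has zero coefficients
  on long chords; comparing double fans of different widths and positions shows that its
  coefficients on the short chords are all equal. Hence the equation is a multiple of the
  inequality, and counting affinely independent points gives \<open>dim F = dim P - 1\<close>.\<close>

section \<open>Affine independence and convex hulls\<close>

lemma exists_nontrivial_solution:
  fixes v :: "'i \<Rightarrow> 'e \<Rightarrow> real"
  assumes "finite E" "finite I" "card E < card I"
  shows "\<exists>c. (\<exists>i\<in>I. c i \<noteq> 0) \<and> (\<forall>e\<in>E. (\<Sum>i\<in>I. c i * v i e) = 0)"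
  using assms
proof (induction E arbitrary: I v rule: finite_induct)
  case empty
  then obtain i where "i \<in> I" by fastforce
  then show ?case by (intro exI[of _ "\<lambda>j. if j = i then 1 else 0"]) auto
next
  case (insert g E)
  have cE: "card E < card I" using insert by simp
  show ?case
  proof (cases "\<forall>i\<in>I. v i g = 0")
    case True
    from insert.IH[OF insert.prems(1) cE, of v] obtain c where
      "\<exists>i\<in>I. c i \<noteq> 0" "\<forall>e\<in>E. (\<Sum>i\<in>I. c i * v i e) = 0" by blast
    with True show ?thesis by (intro exI[of _ c]) auto
  next
    case False
    then obtain i0 where i0: "i0 \<in> I" "v i0 g \<noteq> 0" by blast
    \<comment> \<open>Gaussian elimination: use equation g to eliminate the unknown i0.\<close>
    define w where "w i e = v i e - (v i g / v i0 g) * v i0 e" for i e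
    define I' where "I' = I - {i0}"
    have fI': "finite I'" using insert by (simp add: I'_def)
    have cI': "card E < card I'" using insert i0 by (simp add: I'_def)
    from insert.IH[OF fI' cI', of w] obtain c' where
      c': "\<exists>i\<in>I'. c' i \<noteq> 0" "\<forall>e\<in>E. (\<Sum>i\<in>I'. c' i * w i e) = 0" by blast
    define c where "c i = (if i = i0 then - (\<Sum>j\<in>I'. c' j * v j g) / v i0 g else c' i)" for i
    have I: "I = insert i0 I'" and i0I': "i0 \<notin> I'" using i0 by (auto simp: I'_def)
    have reduced: "(\<Sum>i\<in>I. c i * v i e) = (\<Sum>i\<in>I'. c' i * w i e)" for e
    proof -
      have "(\<Sum>i\<in>I. c i * v i e) = c i0 * v i0 e + (\<Sum>i\<in>I'. c i * v i e)"
        using I i0I' fI' by simp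
      also have "(\<Sum>i\<in>I'. c i * v i e) = (\<Sum>i\<in>I'. c' i * v i e)"
        by (rule sum.cong) (auto simp: c_def i0I')
      moreover have "(\<Sum>i\<in>I'. c' i * w i e)
          = (\<Sum>i\<in>I'. c' i * v i e) - (\<Sum>i\<in>I'. c' i * v i g) / v i0 g * v i0 e"
        by (simp add: w_def algebra_simps sum_subtractf sum_distrib_left sum_divide_distrib
            sum_distrib_right)
      ultimately show ?thesis by (simp add: c_def algebra_simps)
    qed
    show ?thesis
    proof (intro exI[of _ c] conjI)
      show "\<exists>i\<in>I. c i \<noteq> 0" using c' i0I' by (auto simp: c_def I)
      show "\<forall>e\<in>insert g E. (\<Sum>i\<in>I. c i * v i e) = 0"
        using c' i0 by (auto simp: reduced w_def)
    qed
  qed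
qed

lemma aff_indep_card_le:
  fixes T :: "('e \<Rightarrow> real) set"
  assumes "finite N" and supp: "\<forall>y\<in>T. \<forall>f. f \<notin> N \<longrightarrow> y f = 0" and indep: "aff_indep T"
  shows "card T \<le> card N + 1"
proof (rule ccontr)
  assume "\<not> ?thesis"
  with \<open>finite N\<close> have lt: "card (insert None (Some ` N)) < card T" by (simp add: card_image)
  have "finite T" using indep by (simp add: aff_indep_def)
  define v where "v y i = (case i of None \<Rightarrow> 1 | Some f \<Rightarrow> y f)" for y :: "'e \<Rightarrow> real" and i
  obtain c where c: "\<exists>y\<in>T. c y \<noteq> 0" "\<forall>i\<in>insert None (Some ` N). (\<Sum>y\<in>T. c y * v y i) = 0"
    using exists_nontrivial_solution[OF _ \<open>finite T\<close> lt, of v] \<open>finite N\<close> by blast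
  have "sum c T = 0" using c(2) by (auto simp: v_def)
  moreover have "(\<Sum>y\<in>T. c y * y f) = 0" for f
  proof (cases "f \<in> N")
    case True
    then show ?thesis using c(2) by (auto simp: v_def)
  next
    case False
    then show ?thesis using supp by (simp add: sum.neutral)
  qed
  ultimately have "\<forall>y\<in>T. c y = 0" using indep by (auto simp: aff_indep_def)
  with c(1) show False by blast
qed

lemma aff_indep_card_le_hyperplane:
  fixes T :: "('e \<Rightarrow> real) set"
  assumes "finite N" and supp: "\<forall>y\<in>T. \<forall>f. f \<notin> N \<longrightarrow> y f = 0" and indep: "aff_indep T"
    and "D \<subseteq> N" "D \<noteq> {}" and on_hyperplane: "\<forall>y\<in>T. (\<Sum>f\<in>D. y f) = b"
  shows "card T \<le> card N"
proof (rule ccontr)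
  assume "\<not> ?thesis"
  obtain g0 where g0: "g0 \<in> D" using \<open>D \<noteq> {}\<close> by blast
  have "finite D" using \<open>D \<subseteq> N\<close> \<open>finite N\<close> finite_subset by blast
  have g0N: "g0 \<in> N" using g0 \<open>D \<subseteq> N\<close> by auto
  \<comment> \<open>The hyperplane equation makes the coordinate g0 redundant.\<close>
  have "card (insert None (Some ` (N - {g0}))) = card N"
    using \<open>finite N\<close> g0N card_gt_0_iff[of N] by (auto simp: card_image)
  with \<open>\<not> ?thesis\<close> have lt: "card (insert None (Some ` (N - {g0}))) < card T" by simp
  have "finite T" using indep by (simp add: aff_indep_def)
  define v where "v y i = (case i of None \<Rightarrow> 1 | Some f \<Rightarrow> y f)" for y :: "'e \<Rightarrow> real" and i
  obtain c where c: "\<exists>y\<in>T. c y \<noteq> 0"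
      "\<forall>i\<in>insert None (Some ` (N - {g0})). (\<Sum>y\<in>T. c y * v y i) = 0"
    using exists_nontrivial_solution[OF _ \<open>finite T\<close> lt, of v] \<open>finite N\<close> by blast
  have c_sum: "sum c T = 0" using c(2) by (auto simp: v_def)
  have c_N: "(\<Sum>y\<in>T. c y * y f) = 0" if "f \<in> N" "f \<noteq> g0" for f
    using c(2) that by (auto simp: v_def)
  have y_g0: "y g0 = b - (\<Sum>f\<in>D - {g0}. y f)" if "y \<in> T" for y
    using on_hyperplane that g0 \<open>finite D\<close> by (simp add: sum.remove eq_diff_eq)
  have "(\<Sum>y\<in>T. c y * y g0) = (\<Sum>y\<in>T. b * c y - (\<Sum>f\<in>D - {g0}. c y * y f))"
    by (rule sum.cong) (auto simp: y_g0 algebra_simps sum_distrib_left)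
  also have "\<dots> = b * sum c T - (\<Sum>f\<in>D - {g0}. \<Sum>y\<in>T. c y * y f)"
    by (simp add: sum_subtractf sum_distrib_left sum.swap[of _ T])
  also have "(\<Sum>f\<in>D - {g0}. \<Sum>y\<in>T. c y * y f) = 0"
    using c_N \<open>D \<subseteq> N\<close> by (intro sum.neutral) auto
  finally have c_g0: "(\<Sum>y\<in>T. c y * y g0) = 0" using c_sum by simp
  have "(\<Sum>y\<in>T. c y * y f) = 0" for f
  proof (cases "f \<in> N")
    case True
    then show ?thesis using c_N c_g0 by (cases "f = g0") auto
  next
    case False
    then show ?thesis using supp by (simp add: sum.neutral)
  qed
  with c_sum indep have "\<forall>y\<in>T. c y = 0" by (auto simp: aff_indep_def)
  with c(1) show False by blast
qed

definition in_aff_hull :: "('e \<Rightarrow> real) \<Rightarrow> ('e \<Rightarrow> real) set \<Rightarrow> bool" where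
  "in_aff_hull x T \<longleftrightarrow> (\<exists>d. sum d T = 1 \<and> (\<forall>f. x f = (\<Sum>y\<in>T. d y * y f)))"

lemma in_aff_hull_self:
  assumes "finite T" "x \<in> T"
  shows "in_aff_hull x T"
  unfolding in_aff_hull_def
proof (intro exI[of _ "\<lambda>y. if y = x then 1 else 0"] conjI allI)
  show "(\<Sum>y\<in>T. if y = x then 1 else 0) = (1::real)" using assms by simp
  fix f
  have "(\<Sum>y\<in>T. (if y = x then 1 else 0) * y f) = (\<Sum>y\<in>T. if y = x then y f else 0)"
    by (rule sum.cong) auto
  then show "x f = (\<Sum>y\<in>T. (if y = x then 1 else 0) * y f)" using assms by simp
qed

lemma aff_indep_insert:
  assumes indep: "aff_indep T" and "\<not> in_aff_hull x T"
  shows "aff_indep (insert x T)"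
  unfolding aff_indep_def
proof (intro conjI allI impI)
  have "finite T" using indep by (simp add: aff_indep_def)
  then show "finite (insert x T)" by simp
  have "x \<notin> T" using assms in_aff_hull_self \<open>finite T\<close> by blast
  fix c assume h: "sum c (insert x T) = 0 \<and> (\<forall>f. (\<Sum>y\<in>insert x T. c y * y f) = 0)"
  have h1: "c x + sum c T = 0" using h \<open>finite T\<close> \<open>x \<notin> T\<close> by simp
  have h2: "c x * x f + (\<Sum>y\<in>T. c y * y f) = 0" for f using h \<open>finite T\<close> \<open>x \<notin> T\<close> by simp
  have cx: "c x = 0"
  proof (rule ccontr)
    assume cx: "c x \<noteq> 0"
    define d where "d y = - c y / c x" for y
    have "sum d T = - sum c T / c x" by (simp add: d_def sum_negf sum_divide_distrib)
    also have "- sum c T = c x" using h1 by simp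
    finally have "sum d T = 1" using cx by simp
    moreover have "x f = (\<Sum>y\<in>T. d y * y f)" for f
    proof -
      have "(\<Sum>y\<in>T. d y * y f) = - (\<Sum>y\<in>T. c y * y f) / c x"
        by (simp add: d_def sum_divide_distrib sum_negf)
      also have "\<dots> = x f" using h2[of f] cx by (simp add: field_simps)
      finally show ?thesis by simp
    qed
    ultimately have "sum d T = 1 \<and> (\<forall>f. x f = (\<Sum>y\<in>T. d y * y f))" by blast
    with \<open>\<not> in_aff_hull x T\<close> show False unfolding in_aff_hull_def by blast
  qed
  with h1 h2 indep have "\<forall>y\<in>T. c y = 0" by (simp add: aff_indep_def)
  with cx show "\<forall>y\<in>insert x T. c y = 0" by simp
qed

lemma exists_aff_indep_spanning:
  fixes S :: "('e \<Rightarrow> real) set"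
  assumes "finite N" and supp: "\<forall>y\<in>S. \<forall>f. f \<notin> N \<longrightarrow> y f = 0"
  obtains T where "T \<subseteq> S" "aff_indep T" "\<forall>x\<in>S. in_aff_hull x T"
proof -
  define M where "M = {n. \<exists>T\<subseteq>S. aff_indep T \<and> card T = n}"
  have "M \<subseteq> {..card N + 1}"
    using aff_indep_card_le[OF \<open>finite N\<close>] supp by (auto simp: M_def)
  then have "finite M" using finite_subset by blast
  have "0 \<in> M" unfolding M_def by (intro CollectI exI[of _ "{}"]) (simp add: aff_indep_def)
  then have "Max M \<in> M" using \<open>finite M\<close> by (intro Max_in) auto
  then obtain T where T: "T \<subseteq> S" "aff_indep T" "card T = Max M" by (auto simp: M_def)
  have "finite T" using T by (simp add: aff_indep_def)
  \<comment> \<open>A point outside the affine hull would extend T beyond the maximal size.\<close>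
  have "in_aff_hull x T" if "x \<in> S" for x
  proof (rule ccontr)
    assume out: "\<not> in_aff_hull x T"
    then have "x \<notin> T" using in_aff_hull_self \<open>finite T\<close> by blast
    then have "card (insert x T) = Max M + 1" using T \<open>finite T\<close> by simp
    with aff_indep_insert[OF T(2) out] T(1) that have "Max M + 1 \<in> M"
      unfolding M_def by blast
    then have "Max M + 1 \<le> Max M" using \<open>finite M\<close> by (simp add: Max_ge)
    then show False by simp
  qed
  with T that show ?thesis by blast
qed

lemma exists_nontrivial_equation:
  fixes T :: "('e \<Rightarrow> real) set"
  assumes "finite N" "finite T" "finite Z" "Z \<subseteq> N" and few: "card T + card Z < card N + 1"
  obtains a b where "(\<exists>f\<in>N. a f \<noteq> 0) \<or> b \<noteq> 0" "\<forall>y\<in>T. (\<Sum>f\<in>N. a f * y f) = b"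
    "\<forall>f\<in>Z. a f = 0"
proof -
  \<comment> \<open>Unknowns: the coefficients \<open>Some f\<close> and the constant \<open>None\<close>; one equation per point and per
    element of \<open>Z\<close>.\<close>
  define Eqs where "Eqs = Inl ` T \<union> Inr ` Z"
  have "card Eqs = card T + card Z"
    unfolding Eqs_def using \<open>finite T\<close> \<open>finite Z\<close>
    by (subst card_Un_disjoint) (auto simp: card_image)
  with few \<open>finite N\<close> have lt: "card Eqs < card (insert None (Some ` N))"
    by (simp add: card_image)
  have "finite Eqs" using \<open>finite T\<close> \<open>finite Z\<close> by (simp add: Eqs_def)
  define v where "v i e = (case e of
      Inl y \<Rightarrow> (case i of None \<Rightarrow> -1 | Some f \<Rightarrow> y f)
    | Inr g \<Rightarrow> (case i of None \<Rightarrow> 0 | Some f \<Rightarrow> if f = g then 1 else 0))"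
    for i :: "'e option" and e :: "('e \<Rightarrow> real) + 'e"
  obtain c where c: "\<exists>i\<in>insert None (Some ` N). c i \<noteq> 0"
    "\<forall>e\<in>Eqs. (\<Sum>i\<in>insert None (Some ` N). c i * v i e) = 0"
    using exists_nontrivial_solution[OF \<open>finite Eqs\<close> _ lt, of v] \<open>finite N\<close> by blast
  have expand: "(\<Sum>i\<in>insert None (Some ` N). c i * v i e)
      = c None * v None e + (\<Sum>f\<in>N. c (Some f) * v (Some f) e)" for e
    using \<open>finite N\<close> by (simp add: image_iff sum.reindex)
  have eq_T: "(\<Sum>f\<in>N. c (Some f) * y f) = c None" if "y \<in> T" for y
  proof -
    have "0 = (\<Sum>i\<in>insert None (Some ` N). c i * v i (Inl y))"
      using c(2) that by (auto simp: Eqs_def)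
    also have "\<dots> = - c None + (\<Sum>f\<in>N. c (Some f) * y f)"
      by (subst expand) (simp add: v_def)
    finally show ?thesis by simp
  qed
  have eq_Z: "c (Some g) = 0" if "g \<in> Z" for g
  proof -
    have "g \<in> N" using that \<open>Z \<subseteq> N\<close> by auto
    have "0 = (\<Sum>i\<in>insert None (Some ` N). c i * v i (Inr g))"
      using c(2) that by (auto simp: Eqs_def)
    also have "\<dots> = (\<Sum>f\<in>N. c (Some f) * (if f = g then 1 else 0))"
      by (subst expand) (simp add: v_def)
    also have "\<dots> = c (Some g)"
      using \<open>g \<in> N\<close> \<open>finite N\<close> by (simp add: if_distrib sum.delta cong: if_cong)
    finally show ?thesis by simp
  qed
  show ?thesis
    using c(1) eq_T eq_Z by (intro that[of "\<lambda>f. c (Some f)" "c None"]) auto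
qed

lemma in_aff_hull_equation:
  assumes "in_aff_hull x T" and "\<forall>y\<in>T. (\<Sum>f\<in>N. a f * y f) = b"
  shows "(\<Sum>f\<in>N. a f * x f) = b"
proof -
  obtain d where d: "sum d T = 1" "\<forall>f. x f = (\<Sum>y\<in>T. d y * y f)"
    using assms(1) by (auto simp: in_aff_hull_def)
  have "(\<Sum>f\<in>N. a f * x f) = (\<Sum>y\<in>T. d y * (\<Sum>f\<in>N. a f * y f))"
    using d(2) by (simp add: sum_distrib_left algebra_simps sum.swap[of _ N])
  also have "\<dots> = b" using assms(2) d(1) by (simp add: sum_distrib_right[symmetric])
  finally show ?thesis .
qed

lemma aff_indep_card_ge:
  fixes S :: "('e \<Rightarrow> real) set"
  assumes "finite N" "finite Z" "Z \<subseteq> N"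
    and supp: "\<forall>y\<in>S. \<forall>f. f \<notin> N \<longrightarrow> y f = 0"
    and only_trivial: "\<And>a b. \<forall>x\<in>S. (\<Sum>f\<in>N. a f * x f) = b \<Longrightarrow> \<forall>f\<in>Z. a f = 0
        \<Longrightarrow> (\<forall>f\<in>N. a f = 0) \<and> b = 0"
  shows "\<exists>T\<subseteq>S. aff_indep T \<and> card N + 1 \<le> card T + card Z"
proof -
  obtain T where T: "T \<subseteq> S" "aff_indep T" and span: "\<forall>x\<in>S. in_aff_hull x T"
    using exists_aff_indep_spanning[OF \<open>finite N\<close> supp] by blast
  have "finite T" using T by (simp add: aff_indep_def)
  have "card N + 1 \<le> card T + card Z"
  proof (rule ccontr)
    assume "\<not> ?thesis"
    then have "card T + card Z < card N + 1" by simp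
    then obtain a b where ab: "(\<exists>f\<in>N. a f \<noteq> 0) \<or> b \<noteq> 0"
        "\<forall>y\<in>T. (\<Sum>f\<in>N. a f * y f) = b" "\<forall>f\<in>Z. a f = 0"
      by (rule exists_nontrivial_equation[OF \<open>finite N\<close> \<open>finite T\<close> \<open>finite Z\<close> \<open>Z \<subseteq> N\<close>])
    have "\<forall>x\<in>S. (\<Sum>f\<in>N. a f * x f) = b" using span ab(2) in_aff_hull_equation by blast
    then have "(\<forall>f\<in>N. a f = 0) \<and> b = 0" using only_trivial ab(3) by blast
    with ab(1) show False by blast
  qed
  with T show ?thesis by blast
qed

lemma adim_eqI:
  assumes "\<forall>T\<subseteq>S. aff_indep T \<longrightarrow> card T \<le> n" and "S' \<subseteq> S"
    and "\<exists>T\<subseteq>S'. aff_indep T \<and> n \<le> card T"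
  shows "adim S = int n - 1"
proof -
  obtain T where T: "T \<subseteq> S'" "aff_indep T" "n \<le> card T" using assms(3) by blast
  with \<open>S' \<subseteq> S\<close> have "T \<subseteq> S" by blast
  with T assms(1) have "card T = n" by (simp add: antisym)
  with \<open>T \<subseteq> S\<close> T(2) have "\<exists>T\<subseteq>S. aff_indep T \<and> card T = n" by blast
  then have "(GREATEST n. \<exists>T\<subseteq>S. aff_indep T \<and> card T = n) = n"
    using assms(1) by (intro Greatest_equality) auto
  then show ?thesis by (simp add: adim_def)
qed

lemma subset_conv: "S \<subseteq> conv S"
  unfolding conv_def by (intro subsetI CollectI exI[of _ "{_}"] exI[of _ "\<lambda>_. 1"]) auto

lemma conv_vanishing:
  assumes "\<forall>x\<in>S. x f = 0" "y \<in> conv S"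
  shows "y f = 0"
proof -
  obtain T c where "T \<subseteq> S" and y: "y = (\<lambda>f. \<Sum>x\<in>T. c x * x f)"
    using assms(2) by (auto simp: conv_def)
  with assms(1) have "\<forall>x\<in>T. x f = 0" by blast
  then show ?thesis unfolding y by (simp add: sum.neutral)
qed

lemma conv_sum_ge:
  assumes ge: "\<forall>x\<in>S. b \<le> (\<Sum>f\<in>D. x f)" and "y \<in> conv S"
  shows "b \<le> (\<Sum>f\<in>D. y f)"
proof -
  obtain T c where T: "T \<subseteq> S" "\<forall>x\<in>T. 0 \<le> c x" "sum c T = 1"
    and y: "y = (\<lambda>f. \<Sum>x\<in>T. c x * x f)"
    using \<open>y \<in> conv S\<close> by (auto simp: conv_def)
  have "b = (\<Sum>x\<in>T. c x * b)" using T(3) by (simp add: sum_distrib_right[symmetric])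
  also have "\<dots> \<le> (\<Sum>x\<in>T. c x * (\<Sum>f\<in>D. x f))"
    using T ge by (intro sum_mono mult_left_mono) auto
  also have "\<dots> = (\<Sum>f\<in>D. y f)"
    unfolding y by (simp add: sum.swap[of _ D] sum_distrib_left)
  finally show ?thesis .
qed

section \<open>Chordal graphs\<close>

definition graph_of :: "'a set \<Rightarrow> ('a \<Rightarrow> 'a \<Rightarrow> bool) \<Rightarrow> 'a set set" where
  "graph_of V R = {{u, v} | u v. u \<in> V \<and> v \<in> V \<and> R u v}"

lemma doubleton_in_graph_of_iff:
  assumes "\<And>u v. R u v \<Longrightarrow> R v u"
  shows "{a, b} \<in> graph_of V R \<longleftrightarrow> a \<in> V \<and> b \<in> V \<and> R a b"
  using assms by (auto simp: graph_of_def doubleton_eq_iff)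

lemma cycle_neighbours:
  fixes L :: nat
  assumes "i < L" "4 \<le> L"
  obtains p n where "p < L" "n < L" "(p + 1) mod L = i" "(i + 1) mod L = n"
    "p \<noteq> i" "n \<noteq> i" "p \<noteq> n" "p \<noteq> (n + 1) mod L"
proof -
  define p where "p = (if i = 0 then L - 1 else i - 1)"
  define n where "n = (if i = L - 1 then 0 else i + 1)"
  have "(i + 1) mod L = n" using assms by (auto simp: n_def)
  moreover have "p \<noteq> (n + 1) mod L"
    using assms by (cases "i + 2 = L") (auto simp: p_def n_def)
  ultimately show ?thesis using assms by (intro that[of p n]) (auto simp: p_def n_def)
qed

text \<open>A cycle of length at least four has a chord at its \<open>\<sigma>\<close>-largest vertex, whose two
  neighbours on the cycle are \<open>\<sigma>\<close>-smaller and hence adjacent: \<open>\<sigma>\<close> is a perfect elimination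
  ordering read backwards.\<close>

lemma chordal_graph_ofI:
  fixes \<sigma> :: "'a \<Rightarrow> nat"
  assumes sym: "\<And>u v. R u v \<Longrightarrow> R v u" and "inj_on \<sigma> V"
    and simplicial: "\<And>v u1 u2. v \<in> V \<Longrightarrow> u1 \<in> V \<Longrightarrow> u2 \<in> V \<Longrightarrow> u1 \<noteq> u2
      \<Longrightarrow> R v u1 \<Longrightarrow> R v u2 \<Longrightarrow> \<sigma> u1 < \<sigma> v \<Longrightarrow> \<sigma> u2 < \<sigma> v \<Longrightarrow> R u1 u2"
  shows "chordal V (graph_of V R)"
  unfolding chordal_def
proof (intro allI impI, elim conjE)
  fix cs assume cyc: "is_graph_cycle V (graph_of V R) cs" and "4 \<le> length cs"
  define L where "L = length cs"
  have "distinct cs" and sub: "set cs \<subseteq> V" using cyc by (auto simp: is_graph_cycle_def)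
  have step: "R (cs ! i) (cs ! ((i + 1) mod L))" if "i < L" for i
  proof -
    have "{cs ! i, cs ! ((i + 1) mod L)} \<in> graph_of V R"
      using cyc that by (auto simp: is_graph_cycle_def L_def)
    then show ?thesis by (simp add: doubleton_in_graph_of_iff[OF sym])
  qed
  have "Max (\<sigma> ` set cs) \<in> \<sigma> ` set cs" using \<open>4 \<le> length cs\<close> by (intro Max_in) auto
  then obtain i where i: "i < L" "\<sigma> (cs ! i) = Max (\<sigma> ` set cs)"
    by (auto simp: in_set_conv_nth L_def)
  obtain p n where pn: "p < L" "n < L" "(p + 1) mod L = i" "(i + 1) mod L = n"
    "p \<noteq> i" "n \<noteq> i" "p \<noteq> n" "p \<noteq> (n + 1) mod L"
    using cycle_neighbours[OF i(1)] \<open>4 \<le> length cs\<close> by (auto simp: L_def)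
  have R: "R (cs ! i) (cs ! p)" "R (cs ! i) (cs ! n)"
    using step[OF pn(1)] step[OF i(1)] pn(3,4) sym by auto
  have neq: "cs ! p \<noteq> cs ! i" "cs ! n \<noteq> cs ! i" "cs ! p \<noteq> cs ! n"
    using pn i \<open>distinct cs\<close> by (auto simp: nth_eq_iff_index_eq L_def)
  have in_V: "cs ! p \<in> V" "cs ! n \<in> V" "cs ! i \<in> V" using pn i sub by (auto simp: L_def)
  have "\<sigma> (cs ! p) \<le> \<sigma> (cs ! i)" "\<sigma> (cs ! n) \<le> \<sigma> (cs ! i)"
    using i pn by (auto simp: L_def)
  moreover have "\<sigma> (cs ! p) \<noteq> \<sigma> (cs ! i)" "\<sigma> (cs ! n) \<noteq> \<sigma> (cs ! i)"
    using neq in_V \<open>inj_on \<sigma> V\<close> by (auto dest: inj_onD)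
  ultimately have "R (cs ! p) (cs ! n)"
    using simplicial[OF in_V(3,1,2) neq(3) R] by simp
  then have "{cs ! p, cs ! n} \<in> graph_of V R" using in_V by (auto simp: graph_of_def)
  then show "has_chord (graph_of V R) cs"
    unfolding has_chord_def using pn by (auto simp: L_def)
qed

lemma chordal_image:
  assumes ch: "chordal V F" and inj: "inj_on \<phi> V" and sub: "\<forall>e\<in>F. e \<subseteq> V"
  shows "chordal (\<phi> ` V) ((`) \<phi> ` F)"
  unfolding chordal_def
proof (intro allI impI, elim conjE)
  fix cs' assume cyc: "is_graph_cycle (\<phi> ` V) ((`) \<phi> ` F) cs'" and "4 \<le> length cs'"
  define \<psi> where "\<psi> = inv_into V \<phi>"
  define cs where "cs = map \<psi> cs'"
  have sub': "set cs' \<subseteq> \<phi> ` V" and "distinct cs'" using cyc by (auto simp: is_graph_cycle_def)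
  have len: "length cs = length cs'" by (simp add: cs_def)
  have nth: "cs ! i = \<psi> (cs' ! i)" if "i < length cs'" for i using that by (simp add: cs_def)
  have \<phi>\<psi>: "\<phi> (\<psi> x) = x" if "x \<in> \<phi> ` V" for x using that by (simp add: \<psi>_def f_inv_into_f)
  have edge: "{cs ! i, cs ! j} \<in> F"
    if ij: "i < length cs'" "j < length cs'" "{cs' ! i, cs' ! j} \<in> (`) \<phi> ` F" for i j
  proof -
    obtain e where e: "e \<in> F" "{cs' ! i, cs' ! j} = \<phi> ` e" using ij(3) by auto
    have "{cs ! i, cs ! j} = \<psi> ` {cs' ! i, cs' ! j}" using ij(1,2) by (simp add: nth)
    also have "\<dots> = \<psi> ` \<phi> ` e" using e(2) by simp
    also have "\<dots> = e" using e(1) sub inj by (simp add: \<psi>_def inv_into_image_cancel)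
    finally show ?thesis using e by simp
  qed
  have "is_graph_cycle V F cs"
    unfolding is_graph_cycle_def
  proof (intro conjI allI impI)
    show "distinct cs" using \<open>distinct cs'\<close> sub'
      by (simp add: cs_def distinct_map \<psi>_def inj_on_inv_into inj_on_subset)
    show "set cs \<subseteq> V" using sub' by (auto simp: cs_def \<psi>_def inv_into_into)
    show "3 \<le> length cs" using \<open>4 \<le> length cs'\<close> len by simp
    fix i assume "i < length cs"
    then show "{cs ! i, cs ! ((i + 1) mod length cs)} \<in> F"
      using cyc len by (intro edge) (auto simp: is_graph_cycle_def intro: mod_less_divisor)
  qed
  then have "has_chord F cs" using ch \<open>4 \<le> length cs'\<close> len by (auto simp: chordal_def)
  then obtain i j where ij: "i < length cs" "j < length cs" "i \<noteq> j" "j \<noteq> (i + 1) mod length cs"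
      "i \<noteq> (j + 1) mod length cs" "{cs ! i, cs ! j} \<in> F"
    by (auto simp: has_chord_def)
  have "cs' ! i \<in> \<phi> ` V" "cs' ! j \<in> \<phi> ` V" using ij len sub' by auto
  then have "\<phi> ` {cs ! i, cs ! j} = {cs' ! i, cs' ! j}" using ij len by (simp add: nth \<phi>\<psi>)
  then have "{cs' ! i, cs' ! j} \<in> (`) \<phi> ` F" using ij(6) by (metis image_eqI)
  then show "has_chord ((`) \<phi> ` F) cs'" using ij len unfolding has_chord_def by auto
qed

lemma has_chord_ordered:
  assumes "has_chord F cs"
  obtains i j where "i + 2 \<le> j" "j < length cs" "\<not> (i = 0 \<and> j + 1 = length cs)"
    "{cs ! i, cs ! j} \<in> F"
proof -
  obtain i j where ij: "i < length cs" "j < length cs" "i \<noteq> j" "j \<noteq> (i + 1) mod length cs"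
      "i \<noteq> (j + 1) mod length cs" "{cs ! i, cs ! j} \<in> F"
    using assms by (auto simp: has_chord_def)
  show ?thesis
  proof (cases "i < j")
    case True
    with ij show ?thesis by (intro that[of i j]) auto
  next
    case False
    with ij show ?thesis by (intro that[of j i]) (auto simp: insert_commute)
  qed
qed

section \<open>The cycle\<close>

definition cyc_adj :: "nat \<Rightarrow> nat \<Rightarrow> nat \<Rightarrow> bool" where
  "cyc_adj k u v \<longleftrightarrow> v = u + 1 \<or> u = v + 1 \<or> (u = 0 \<and> v = k - 1) \<or> (v = 0 \<and> u = k - 1)"

lemma dC_sym: "dC k i j = dC k j i"
  by (auto simp: dC_def)

lemma dC_eq_0_iff: "i < k \<Longrightarrow> j < k \<Longrightarrow> dC k i j = 0 \<longleftrightarrow> i = j"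
  by (auto simp: dC_def min_def)

lemma dC_eq_1_iff: "3 \<le> k \<Longrightarrow> i < k \<Longrightarrow> j < k \<Longrightarrow> dC k i j = 1 \<longleftrightarrow> cyc_adj k i j"
  unfolding dC_def cyc_adj_def min_def
  by (cases "i < j"; cases "j - i \<le> k - j + i"; cases "i - j \<le> k - i + j"; simp; linarith)

lemma dC_eq_2_iff:
  "5 \<le> k \<Longrightarrow> i < k \<Longrightarrow> j < k \<Longrightarrow>
    dC k i j = 2 \<longleftrightarrow> j = i + 2 \<or> i = j + 2 \<or> j + k = i + 2 \<or> i + k = j + 2"
  unfolding dC_def min_def
  by (cases "i < j"; cases "j - i \<le> k - j + i"; cases "i - j \<le> k - i + j"; simp; linarith)

definition rot :: "nat \<Rightarrow> nat \<Rightarrow> nat \<Rightarrow> nat" where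
  "rot k s t = (t + s) mod k"

definition unrot :: "nat \<Rightarrow> nat \<Rightarrow> nat \<Rightarrow> nat" where
  "unrot k s u = rot k (k - s mod k) u"

lemma rot_less: "0 < k \<Longrightarrow> rot k s t < k"
  by (simp add: rot_def)

lemma unrot_less: "0 < k \<Longrightarrow> unrot k s u < k"
  by (simp add: unrot_def rot_less)

lemma rot_rot: "rot k (rot k a i) t = rot k a (i + t)"
  unfolding rot_def by (simp add: mod_add_right_eq add.commute add.left_commute)

lemma rot_shift: "rot k (s + c) t = rot k s (t + c)"
  by (simp add: rot_def add.commute add.left_commute)

lemma rot_mod: "rot k s (t mod k) = rot k s t"
  by (simp add: rot_def mod_add_left_eq)

lemma rot_add_self: "rot k s (t + k) = rot k s t"
  by (simp add: rot_def add.commute add.left_commute)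

lemma rot_add_self_left: "rot k (s + k) t = rot k s t"
  by (simp add: rot_def add.assoc[symmetric])

lemma rot_unrot: "u < k \<Longrightarrow> rot k s (unrot k s u) = u"
proof -
  assume "u < k"
  have "rot k s (unrot k s u) = (u + (k - s mod k) + s) mod k"
    by (simp add: rot_def unrot_def mod_add_left_eq)
  also have "u + (k - s mod k) + s = u + k + k * (s div k)"
    using \<open>u < k\<close> mod_less_divisor[of k s] mod_mult_div_eq[of s k] by linarith
  finally show ?thesis using \<open>u < k\<close> by simp
qed

lemma unrot_rot: "t < k \<Longrightarrow> unrot k s (rot k s t) = t"
proof -
  assume "t < k"
  have "unrot k s (rot k s t) = (t + s + (k - s mod k)) mod k"
    by (simp add: rot_def unrot_def mod_add_left_eq)
  also have "t + s + (k - s mod k) = t + k + k * (s div k)"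
    using \<open>t < k\<close> mod_less_divisor[of k s] mod_mult_div_eq[of s k] by linarith
  finally show ?thesis using \<open>t < k\<close> by simp
qed

lemma rot_inj: "i < k \<Longrightarrow> j < k \<Longrightarrow> rot k a i = rot k a j \<Longrightarrow> i = j"
  by (metis unrot_rot)

lemma inj_on_rot: "inj_on (rot k s) (cyc_V k)"
  by (auto simp: inj_on_def cyc_V_def dest: rot_inj)

lemma rot_image: "0 < k \<Longrightarrow> rot k s ` cyc_V k = cyc_V k"
proof
  assume "0 < k"
  show "rot k s ` cyc_V k \<subseteq> cyc_V k" using \<open>0 < k\<close> by (auto simp: cyc_V_def rot_less)
  show "cyc_V k \<subseteq> rot k s ` cyc_V k"
  proof
    fix u assume "u \<in> cyc_V k"
    then have "u = rot k s (unrot k s u)" "unrot k s u \<in> cyc_V k"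
      using \<open>0 < k\<close> by (auto simp: cyc_V_def rot_unrot unrot_less)
    then show "u \<in> rot k s ` cyc_V k" by blast
  qed
qed

lemma dC_rot: "i < k \<Longrightarrow> j < k \<Longrightarrow> dC k (rot k s i) (rot k s j) = dC k i j"
proof -
  assume "i < k" "j < k"
  define s' where "s' = s mod k"
  have "s' < k" using \<open>i < k\<close> by (simp add: s'_def)
  have "rot k s t = (if t + s' < k then t + s' else t + s' - k)" if "t < k" for t
  proof -
    have "rot k s t = (t + s') mod k" unfolding rot_def s'_def by (rule mod_add_right_eq[symmetric])
    also have "\<dots> = (if t + s' < k then t + s' else t + s' - k)"
      using that \<open>s' < k\<close> by (simp add: mod_if)
    finally show ?thesis .
  qed
  then show ?thesis using \<open>i < k\<close> \<open>j < k\<close> \<open>s' < k\<close>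
    unfolding dC_def min_def
    by (cases "i + s' < k"; cases "j + s' < k"; cases "i < j"; simp split: if_split; linarith?)
qed

lemma dC_unrot: "i < k \<Longrightarrow> j < k \<Longrightarrow> dC k (unrot k s i) (unrot k s j) = dC k i j"
  by (simp add: unrot_def dC_rot)

lemma cyc_E_iff_dC:
  assumes "3 \<le> k" "i < k" "j < k"
  shows "{i, j} \<in> cyc_E k \<longleftrightarrow> dC k i j = 1"
proof
  assume "{i, j} \<in> cyc_E k"
  then consider t where "1 \<le> t" "t \<le> k - 1" "{i, j} = {t - 1, t}" | "{i, j} = {k - 1, 0}"
    by (auto simp: cyc_E_def)
  then show "dC k i j = 1"
    by cases (use assms in \<open>auto simp: doubleton_eq_iff dC_def\<close>)
next
  assume "dC k i j = 1"
  then have "cyc_adj k i j" using dC_eq_1_iff assms by simp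
  then consider "j = i + 1" | "i = j + 1" | "i = 0" "j = k - 1" | "j = 0" "i = k - 1"
    by (auto simp: cyc_adj_def)
  then show "{i, j} \<in> cyc_E k"
  proof cases
    case 1
    then show ?thesis using assms unfolding cyc_E_def by (intro UnI1) (auto intro!: exI[of _ j])
  next
    case 2
    then show ?thesis using assms unfolding cyc_E_def by (intro UnI1) (auto intro!: exI[of _ i])
  qed (auto simp: cyc_E_def)
qed

lemma cyc_E_elem:
  assumes "3 \<le> k" "f \<in> cyc_E k"
  obtains i j where "f = {i, j}" "i < k" "j < k" "dC k i j = 1"
proof -
  from assms(2) obtain i j where "f = {i, j}" "i < k" "j < k"
    using assms(1) by (auto simp: cyc_E_def intro: that)
  with assms cyc_E_iff_dC show ?thesis by (intro that) auto
qed

definition cyc_nonedges :: "nat \<Rightarrow> nat set set" where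
  "cyc_nonedges k = nonedges (cyc_V k) (cyc_E k)"

definition short_chords :: "nat \<Rightarrow> nat set set" where
  "short_chords k = {f \<in> nonedges (cyc_V k) (cyc_E k).
     \<exists>i j. i \<in> cyc_V k \<and> j \<in> cyc_V k \<and> f = {i, j} \<and> dC k i j = 2}"

abbreviation cyc_X :: "nat \<Rightarrow> (nat set \<Rightarrow> real) set" where
  "cyc_X k \<equiv> X_set (cyc_V k) (cyc_E k)"

lemma cyc_nonedges_iff:
  assumes "3 \<le> k"
  shows "f \<in> cyc_nonedges k \<longleftrightarrow> (\<exists>i j. f = {i, j} \<and> i < k \<and> j < k \<and> 2 \<le> dC k i j)"
proof
  assume "f \<in> cyc_nonedges k"
  then obtain i j where ij: "f = {i, j}" "i < k" "j < k" "i \<noteq> j" "{i, j} \<notin> cyc_E k"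
    by (auto simp: cyc_nonedges_def nonedges_def cyc_V_def)
  then have "dC k i j \<noteq> 0" "dC k i j \<noteq> 1" using dC_eq_0_iff cyc_E_iff_dC assms by auto
  with ij show "\<exists>i j. f = {i, j} \<and> i < k \<and> j < k \<and> 2 \<le> dC k i j"
    by (intro exI[of _ i] exI[of _ j]) auto
next
  assume "\<exists>i j. f = {i, j} \<and> i < k \<and> j < k \<and> 2 \<le> dC k i j"
  then obtain i j where ij: "f = {i, j}" "i < k" "j < k" "2 \<le> dC k i j" by blast
  then have "i \<noteq> j" "{i, j} \<notin> cyc_E k" using dC_eq_0_iff cyc_E_iff_dC assms by fastforce+
  with ij show "f \<in> cyc_nonedges k" by (auto simp: cyc_nonedges_def nonedges_def cyc_V_def)
qed

lemma short_chords_iff: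
  assumes "3 \<le> k"
  shows "f \<in> short_chords k \<longleftrightarrow> (\<exists>i j. f = {i, j} \<and> i < k \<and> j < k \<and> dC k i j = 2)"
proof
  assume "\<exists>i j. f = {i, j} \<and> i < k \<and> j < k \<and> dC k i j = 2"
  then obtain i j where ij: "f = {i, j}" "i < k" "j < k" "dC k i j = 2" by blast
  then have "f \<in> nonedges (cyc_V k) (cyc_E k)"
    using cyc_nonedges_iff[OF assms] by (fastforce simp: cyc_nonedges_def)
  with ij show "f \<in> short_chords k" by (auto simp: short_chords_def cyc_V_def)
qed (auto simp: short_chords_def cyc_V_def)

lemma short_chordsI: "3 \<le> k \<Longrightarrow> i < k \<Longrightarrow> j < k \<Longrightarrow> dC k i j = 2 \<Longrightarrow> {i, j} \<in> short_chords k"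
  using short_chords_iff by blast

lemma short_chords_subset: "short_chords k \<subseteq> cyc_nonedges k"
  by (auto simp: short_chords_def cyc_nonedges_def)

lemma finite_cyc_nonedges: "finite (cyc_nonedges k)"
proof -
  have "cyc_nonedges k \<subseteq> Pow {0..<k}" by (auto simp: cyc_nonedges_def nonedges_def cyc_V_def)
  then show ?thesis by (rule finite_subset) simp
qed

lemma finite_short_chords: "finite (short_chords k)"
  using finite_cyc_nonedges short_chords_subset by (rule finite_subset[rotated])

lemma rot_in_cyc_E: "3 \<le> k \<Longrightarrow> t + 1 < k \<Longrightarrow> {rot k a t, rot k a (t + 1)} \<in> cyc_E k"
  using dC_rot[of t k "t + 1" a] by (simp add: cyc_E_iff_dC rot_less dC_def)

lemma rot_in_short_chords:
  "5 \<le> k \<Longrightarrow> t + 2 < k \<Longrightarrow> {rot k a t, rot k a (t + 2)} \<in> short_chords k"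
proof -
  assume "5 \<le> k" "t + 2 < k"
  then have "dC k (rot k a t) (rot k a (t + 2)) = 2" by (simp add: dC_rot) (simp add: dC_def)
  with \<open>5 \<le> k\<close> show ?thesis by (intro short_chordsI) (simp_all add: rot_less)
qed

section \<open>Chordal supergraphs of the cycle have two short chords\<close>

lemma arc_is_graph_cycle:
  assumes "3 \<le> k" "cyc_E k \<subseteq> H" "2 \<le> L" "L < k" "{rot k a 0, rot k a L} \<in> H"
  shows "is_graph_cycle (cyc_V k) H (map (rot k a) [0..<L + 1])" (is "is_graph_cycle _ _ ?cs")
  unfolding is_graph_cycle_def
proof (intro conjI allI impI)
  have nth: "?cs ! i = rot k a i" if "i < L + 1" for i
    using that by (subst nth_map) (simp_all del: upt_Suc)
  have "inj_on (rot k a) {0..<L + 1}"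
  proof (rule inj_onI)
    fix x y assume "x \<in> {0..<L + 1}" "y \<in> {0..<L + 1}" "rot k a x = rot k a y"
    then show "x = y" using assms by (intro rot_inj[of x k y a]) auto
  qed
  then show "distinct ?cs" by (simp add: distinct_map del: upt_Suc)
  show "set ?cs \<subseteq> cyc_V k" using assms by (auto simp: cyc_V_def rot_less)
  show "3 \<le> length ?cs" using assms by simp
  fix i assume "i < length ?cs"
  show "{?cs ! i, ?cs ! ((i + 1) mod length ?cs)} \<in> H"
  proof (cases "i = L")
    case True
    then show ?thesis using assms nth by (simp add: insert_commute)
  next
    case False
    with \<open>i < length ?cs\<close> have "i + 1 < L + 1" by simp
    with assms rot_in_cyc_E[of k i a] show ?thesis by (auto simp: nth simp del: upt_Suc)
  qed
qed

text \<open>Induction on the arc length: a chord of the cycle formed by the arc and its closing chord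
  closes a strictly shorter arc.\<close>

lemma chordal_arc_ear:
  assumes k: "3 \<le> k" and ch: "chordal (cyc_V k) H" and EH: "cyc_E k \<subseteq> H"
  shows "2 \<le> L \<Longrightarrow> L < k \<Longrightarrow> {rot k a 0, rot k a L} \<in> H
    \<Longrightarrow> \<exists>t. t + 2 \<le> L \<and> {rot k a t, rot k a (t + 2)} \<in> H"
proof (induction L arbitrary: a rule: less_induct)
  case (less L)
  show ?case
  proof (cases "L = 2")
    case True
    with less.prems show ?thesis by (intro exI[of _ 0]) (simp add: numeral_2_eq_2)
  next
    case False
    define cs where "cs = map (rot k a) [0..<L + 1]"
    have "is_graph_cycle (cyc_V k) H cs"
      unfolding cs_def using arc_is_graph_cycle k EH less.prems by blast
    moreover have "4 \<le> length cs" using False less.prems by (simp add: cs_def)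
    ultimately have "has_chord H cs" using ch by (simp add: chordal_def)
    then obtain i j where "i + 2 \<le> j" "j < length cs" "\<not> (i = 0 \<and> j + 1 = length cs)"
        "{cs ! i, cs ! j} \<in> H"
      by (rule has_chord_ordered)
    then have ij: "i + 2 \<le> j" "j \<le> L" "j - i < L"
        "{rot k (rot k a i) 0, rot k (rot k a i) (j - i)} \<in> H"
      by (auto simp: cs_def rot_rot simp del: upt_Suc)
    with less.IH[OF ij(3)] less.prems obtain t where
      "t + 2 \<le> j - i" "{rot k (rot k a i) t, rot k (rot k a i) (t + 2)} \<in> H"
      by fastforce
    then show ?thesis using ij by (intro exI[of _ "i + t"]) (auto simp: rot_rot add.assoc)
  qed
qed

lemma ears_of_complementary_arcs_distinct:
  fixes k i x j y :: nat
  assumes "5 \<le> k" "i \<le> x" "x + 2 \<le> j" "j < k" "j \<le> y" "y + 2 \<le> k + i"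
  shows "{x, x + 2} \<noteq> {y mod k, (y + 2) mod k}"
proof -
  consider "y + 2 < k" | "y < k" "k \<le> y + 2" | "k \<le> y" by linarith
  then show ?thesis
  proof cases
    case 1
    then show ?thesis using assms by (auto simp: doubleton_eq_iff)
  next
    case 2
    then have "(y + 2) mod k = y + 2 - k" using assms by (simp add: mod_if)
    then show ?thesis using 2 assms by (auto simp: doubleton_eq_iff)
  next
    case 3
    then have "y mod k = y - k" "(y + 2) mod k = y + 2 - k" using assms by (simp_all add: mod_if)
    then show ?thesis using 3 assms by (auto simp: doubleton_eq_iff)
  qed
qed

lemma chordal_two_short_chords:
  assumes k: "5 \<le> k" and ch: "chordal (cyc_V k) H" and EH: "cyc_E k \<subseteq> H"
  obtains e1 e2 where "e1 \<noteq> e2" "e1 \<in> H \<inter> short_chords k" "e2 \<in> H \<inter> short_chords k"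
proof -
  define cs where "cs = map (rot k 0) [0..<k]"
  have "{rot k 0 0, rot k 0 (k - 1)} \<in> H" using EH k by (auto simp: rot_def cyc_E_def insert_commute)
  then have "is_graph_cycle (cyc_V k) H (map (rot k 0) [0..<k - 1 + 1])"
    using k EH by (intro arc_is_graph_cycle) auto
  moreover have "k - 1 + 1 = k" using k by simp
  ultimately have "has_chord H cs" using ch k by (simp add: chordal_def cs_def)
  then obtain i j where "i + 2 \<le> j" "j < length cs" "\<not> (i = 0 \<and> j + 1 = length cs)"
      "{cs ! i, cs ! j} \<in> H"
    by (rule has_chord_ordered)
  then have ij: "i + 2 \<le> j" "j < k" "j - i + 2 \<le> k" "{i, j} \<in> H"
    by (auto simp: cs_def rot_def)
  have "\<exists>t. t + 2 \<le> j - i \<and> {rot k i t, rot k i (t + 2)} \<in> H"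
    using ij k by (intro chordal_arc_ear[OF _ ch EH]) (auto simp: rot_def)
  then obtain t1 where t1: "t1 + 2 \<le> j - i" "{rot k i t1, rot k i (t1 + 2)} \<in> H" by blast
  have "rot k j (k - (j - i)) = i" using ij by (simp add: rot_def)
  then have "\<exists>t. t + 2 \<le> k - (j - i) \<and> {rot k j t, rot k j (t + 2)} \<in> H"
    using ij k by (intro chordal_arc_ear[OF _ ch EH]) (auto simp: rot_def insert_commute)
  then obtain t2 where t2: "t2 + 2 \<le> k - (j - i)" "{rot k j t2, rot k j (t2 + 2)} \<in> H" by blast
  have "{i + t1, i + t1 + 2} \<noteq> {(j + t2) mod k, (j + t2 + 2) mod k}"
    using k t1 t2 ij by (intro ears_of_complementary_arcs_distinct[of k i _ j]) auto
  moreover have "{rot k i t1, rot k i (t1 + 2)} = {i + t1, i + t1 + 2}"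
    using t1 ij by (simp add: rot_def add.commute)
  moreover have "{rot k j t2, rot k j (t2 + 2)} = {(j + t2) mod k, (j + t2 + 2) mod k}"
    by (simp add: rot_def add.commute add.left_commute)
  moreover have "t1 + 2 < k" "t2 + 2 < k" using t1 t2 ij by auto
  then have "{rot k i t1, rot k i (t1 + 2)} \<in> short_chords k"
    "{rot k j t2, rot k j (t2 + 2)} \<in> short_chords k"
    by (simp_all only: rot_in_short_chords[OF k])
  ultimately show ?thesis using t1 t2 that by auto
qed

lemma short_chords_sum_ge_2:
  assumes k: "5 \<le> k" and x: "x \<in> cyc_X k"
  shows "2 \<le> (\<Sum>f\<in>short_chords k. x f)"
proof -
  define H where "H = cyc_E k \<union> {f \<in> nonedges (cyc_V k) (cyc_E k). x f = 1}"
  have "chordal (cyc_V k) H" using x by (simp add: X_set_def H_def)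
  then obtain e1 e2 where e: "e1 \<noteq> e2" "e1 \<in> H \<inter> short_chords k" "e2 \<in> H \<inter> short_chords k"
    using chordal_two_short_chords[OF k] H_def by blast
  have x01: "x f \<in> {0, 1}" if "f \<in> short_chords k" for f
    using x that short_chords_subset by (auto simp: X_set_def cyc_nonedges_def)
  have "x e = 1" if "e \<in> H \<inter> short_chords k" for e
    using that short_chords_subset by (auto simp: H_def cyc_nonedges_def nonedges_def)
  then have "2 = (\<Sum>f\<in>{e1, e2}. x f)" using e by simp
  also have "\<dots> \<le> (\<Sum>f\<in>short_chords k. x f)"
    using e x01 finite_short_chords by (intro sum_mono2) force+
  finally show ?thesis .
qed

section \<open>The polytope is full-dimensional\<close>

lemma indicator_nonedges_in_X_set:
  assumes "chordal V H" "F \<subseteq> H" and two_sets: "\<forall>f\<in>H. \<exists>u v. f = {u, v} \<and> u \<in> V \<and> v \<in> V \<and> u \<noteq> v"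
  shows "indicator (H \<inter> nonedges V F) \<in> X_set V F"
proof -
  have "F \<union> {f \<in> nonedges V F. indicator (H \<inter> nonedges V F) f = (1::real)} = H"
  proof
    show "H \<subseteq> F \<union> {f \<in> nonedges V F. indicator (H \<inter> nonedges V F) f = (1::real)}"
      using two_sets by (fastforce simp: nonedges_def)
  qed (use assms(2) in \<open>auto simp: indicator_eq_1_iff\<close>)
  with assms(1) show ?thesis by (simp add: X_set_def indicator_def)
qed

lemma sum_indicator_cyc_nonedges:
  fixes a :: "nat set \<Rightarrow> real"
  assumes "A \<subseteq> cyc_nonedges k"
  shows "(\<Sum>f\<in>A. a f * indicator (H \<inter> cyc_nonedges k) f) = (\<Sum>f\<in>A \<inter> H. a f)"
proof -
  have "finite A" using assms finite_cyc_nonedges finite_subset by blast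
  moreover have "A \<inter> (H \<inter> cyc_nonedges k) = A \<inter> H" using assms by blast
  ultimately show ?thesis by simp
qed

text \<open>For \<open>g = {}\<close> this is the complete graph.\<close>

definition complete_minus :: "nat \<Rightarrow> nat set \<Rightarrow> nat set set" where
  "complete_minus k g = graph_of (cyc_V k) (\<lambda>u v. u \<noteq> v \<and> {u, v} \<noteq> g)"

text \<open>Ordering the vertices with an endpoint \<open>p\<close> of \<open>g\<close> last, every vertex is simplicial.\<close>

lemma chordal_complete_minus:
  assumes "p < k" and "\<forall>u v. {u, v} = g \<longrightarrow> u = p \<or> v = p"
  shows "chordal (cyc_V k) (complete_minus k g)"
  unfolding complete_minus_def
proof (rule chordal_graph_ofI[where \<sigma> = "\<lambda>t. if t = p then k else t"])
  show "inj_on (\<lambda>t. if t = p then k else t) (cyc_V k)" by (auto simp: inj_on_def cyc_V_def)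
  fix v u1 u2 assume h: "v \<in> cyc_V k" "u1 \<in> cyc_V k" "u2 \<in> cyc_V k" "u1 \<noteq> u2"
    "(if u1 = p then k else u1) < (if v = p then k else v)"
    "(if u2 = p then k else u2) < (if v = p then k else v)"
  then have "u1 \<noteq> p" "u2 \<noteq> p" by (auto simp: cyc_V_def split: if_splits)
  with h assms(2) show "u1 \<noteq> u2 \<and> {u1, u2} \<noteq> g" by blast
qed (auto simp: insert_commute)

lemma complete_minus_in_cyc_X:
  assumes k: "3 \<le> k" and g: "g = {} \<or> g \<in> cyc_nonedges k"
  shows "indicator (complete_minus k g \<inter> cyc_nonedges k) \<in> cyc_X k"
  unfolding cyc_nonedges_def
proof (rule indicator_nonedges_in_X_set)
  obtain p where "p < k" "\<forall>u v. {u, v} = g \<longrightarrow> u = p \<or> v = p"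
  proof (cases "g = {}")
    case True
    with k show ?thesis by (intro that[of 0]) auto
  next
    case False
    with g obtain p q where "g = {p, q}" "p < k" using cyc_nonedges_iff[OF k] by blast
    with that show ?thesis by (auto simp: doubleton_eq_iff)
  qed
  then show "chordal (cyc_V k) (complete_minus k g)" by (rule chordal_complete_minus)
  show "cyc_E k \<subseteq> complete_minus k g"
  proof
    fix f assume f: "f \<in> cyc_E k"
    then obtain i j where ij: "f = {i, j}" "i < k" "j < k" "dC k i j = 1"
      using cyc_E_elem k by metis
    moreover have "f \<noteq> g" using g f ij(1) by (auto simp: cyc_nonedges_def nonedges_def)
    moreover have "i \<noteq> j" using ij(4) dC_eq_0_iff[OF ij(2,3)] by auto
    ultimately show "f \<in> complete_minus k g"
      unfolding complete_minus_def graph_of_def cyc_V_def by auto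
  qed
  show "\<forall>f\<in>complete_minus k g. \<exists>u v. f = {u, v} \<and> u \<in> cyc_V k \<and> v \<in> cyc_V k \<and> u \<noteq> v"
    by (auto simp: complete_minus_def graph_of_def)
qed

lemma cyc_nonedges_inter_complete_minus: "cyc_nonedges k \<inter> complete_minus k g = cyc_nonedges k - {g}"
  by (auto simp: cyc_nonedges_def nonedges_def complete_minus_def graph_of_def)

lemma equation_on_cyc_X_trivial:
  assumes k: "3 \<le> k" and eq: "\<forall>x\<in>cyc_X k. (\<Sum>f\<in>cyc_nonedges k. a f * x f) = b"
  shows "(\<forall>f\<in>cyc_nonedges k. a f = 0) \<and> b = 0"
proof -
  have sum_without: "(\<Sum>f\<in>cyc_nonedges k - {g}. a f) = b" if "g = {} \<or> g \<in> cyc_nonedges k" for g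
    using eq[rule_format, OF complete_minus_in_cyc_X[OF k that]]
    by (simp only: sum_indicator_cyc_nonedges[OF order_refl] cyc_nonedges_inter_complete_minus)
  have "{} \<notin> cyc_nonedges k" by (auto simp: cyc_nonedges_def nonedges_def)
  then have b: "(\<Sum>f\<in>cyc_nonedges k. a f) = b" using sum_without[of "{}"] by simp
  have "a g = 0" if "g \<in> cyc_nonedges k" for g
    using sum_without[of g] b that finite_cyc_nonedges by (simp add: sum.remove)
  with b show ?thesis by simp
qed

lemma conv_cyc_X_supported: "y \<in> conv (cyc_X k) \<Longrightarrow> f \<notin> cyc_nonedges k \<Longrightarrow> y f = 0"
  using conv_vanishing[of "cyc_X k" f y] by (auto simp: X_set_def cyc_nonedges_def)

lemma adim_conv_cyc_X:
  assumes k: "3 \<le> k"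
  shows "adim (conv (cyc_X k)) = int (card (cyc_nonedges k))"
proof -
  have "adim (conv (cyc_X k)) = int (card (cyc_nonedges k) + 1) - 1"
  proof (rule adim_eqI[OF _ subset_conv])
    show "\<forall>T\<subseteq>conv (cyc_X k). aff_indep T \<longrightarrow> card T \<le> card (cyc_nonedges k) + 1"
      using aff_indep_card_le[OF finite_cyc_nonedges] conv_cyc_X_supported by blast
    have "\<exists>T\<subseteq>cyc_X k. aff_indep T \<and> card (cyc_nonedges k) + 1 \<le> card T + card ({} :: nat set set)"
      using equation_on_cyc_X_trivial[OF k] subset_conv conv_cyc_X_supported
      by (intro aff_indep_card_ge[OF finite_cyc_nonedges]) blast+
    then show "\<exists>T\<subseteq>cyc_X k. aff_indep T \<and> card (cyc_nonedges k) + 1 \<le> card T" by simp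
  qed
  then show ?thesis by simp
qed

section \<open>Double fans and the face\<close>

definition rot_graph :: "nat \<Rightarrow> nat \<Rightarrow> (nat \<Rightarrow> nat \<Rightarrow> bool) \<Rightarrow> nat set set" where
  "rot_graph k s R = (`) (rot k s) ` graph_of (cyc_V k) R"

lemma chordal_rot_graph:
  fixes \<sigma> :: "nat \<Rightarrow> nat"
  assumes "0 < k" and sym: "\<And>u v. R u v \<Longrightarrow> R v u" and inj: "inj_on \<sigma> (cyc_V k)"
    and simplicial: "\<And>v u1 u2. v \<in> cyc_V k \<Longrightarrow> u1 \<in> cyc_V k \<Longrightarrow> u2 \<in> cyc_V k \<Longrightarrow> u1 \<noteq> u2
      \<Longrightarrow> R v u1 \<Longrightarrow> R v u2 \<Longrightarrow> \<sigma> u1 < \<sigma> v \<Longrightarrow> \<sigma> u2 < \<sigma> v \<Longrightarrow> R u1 u2"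
  shows "chordal (cyc_V k) (rot_graph k s R)"
proof -
  have "chordal (cyc_V k) (graph_of (cyc_V k) R)"
    by (rule chordal_graph_ofI[OF sym inj simplicial])
  then have "chordal (rot k s ` cyc_V k) ((`) (rot k s) ` graph_of (cyc_V k) R)"
    using inj_on_rot by (intro chordal_image) (auto simp: graph_of_def)
  then show ?thesis using rot_image[OF \<open>0 < k\<close>] by (simp add: rot_graph_def)
qed

lemma rot_graph_elem:
  assumes "f \<in> rot_graph k s R"
  obtains a b where "a < k" "b < k" "R a b" "f = {rot k s a, rot k s b}"
  using assms by (auto simp: rot_graph_def graph_of_def cyc_V_def)

lemma rot_graph_intro: "a < k \<Longrightarrow> b < k \<Longrightarrow> R a b \<Longrightarrow> {rot k s a, rot k s b} \<in> rot_graph k s R"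
  unfolding rot_graph_def graph_of_def cyc_V_def by (rule image_eqI[of _ _ "{a, b}"]) auto

lemma doubleton_in_rot_graph_iff:
  assumes "0 < k" and sym: "\<And>u v. R u v \<Longrightarrow> R v u" and "u < k" "v < k"
  shows "{u, v} \<in> rot_graph k s R \<longleftrightarrow> R (unrot k s u) (unrot k s v)"
proof
  assume "{u, v} \<in> rot_graph k s R"
  then obtain a b where ab: "a < k" "b < k" "R a b" "{u, v} = {rot k s a, rot k s b}"
    by (rule rot_graph_elem)
  then have "(u = rot k s a \<and> v = rot k s b) \<or> (u = rot k s b \<and> v = rot k s a)"
    by (auto simp: doubleton_eq_iff)
  with ab sym show "R (unrot k s u) (unrot k s v)" by (auto simp: unrot_rot)
next
  assume "R (unrot k s u) (unrot k s v)"
  then have "{rot k s (unrot k s u), rot k s (unrot k s v)} \<in> rot_graph k s R"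
    using assms by (intro rot_graph_intro) (auto simp: unrot_less)
  with assms show "{u, v} \<in> rot_graph k s R" by (simp add: rot_unrot)
qed

text \<open>The test graphs for the face (before rotation): the cycle, a fan from vertex \<open>1\<close> to
  \<open>3, \<dots>, L + 1\<close>, a fan from \<open>L + 1\<close> to \<open>L + 3, \<dots>, k - 1, 0, 1\<close>, and, if \<open>e\<close> holds, the extra
  chord \<open>{0, L}\<close>. The two fans triangulate the two sides of the chord \<open>{1, L + 1}\<close>, with ears
  \<open>{1, 3}\<close> and \<open>{L + 1, L + 3}\<close>.\<close>

definition fan_edge :: "nat \<Rightarrow> nat \<Rightarrow> bool \<Rightarrow> nat \<Rightarrow> nat \<Rightarrow> bool" where
  "fan_edge k L e u v \<longleftrightarrow> (u = 1 \<and> 3 \<le> v \<and> v \<le> L + 1)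
     \<or> (u = L + 1 \<and> (L + 3 \<le> v \<and> v < k \<or> v = 0 \<or> v = 1)) \<or> (e \<and> u = 0 \<and> v = L)"

definition double_fan :: "nat \<Rightarrow> nat \<Rightarrow> bool \<Rightarrow> nat \<Rightarrow> nat \<Rightarrow> bool" where
  "double_fan k L e u v \<longleftrightarrow> cyc_adj k u v \<or> fan_edge k L e u v \<or> fan_edge k L e v u"

text \<open>A perfect elimination ordering of the double fan, eliminating \<open>2, 3, \<dots>, L\<close>, then
  \<open>L + 2, \<dots>, k - 1\<close>, and finally \<open>0, L + 1, 1\<close>.\<close>

definition fan_order :: "nat \<Rightarrow> nat \<Rightarrow> nat \<Rightarrow> nat" where
  "fan_order k L t = (if t = 1 then 0 else if t = L + 1 then 1 else if t = 0 then 2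
     else if t \<le> L then 3 * k - t else 2 * k - t)"

lemma double_fan_sym: "double_fan k L e u v \<Longrightarrow> double_fan k L e v u"
  unfolding double_fan_def cyc_adj_def by auto

lemma double_fan_irrefl: "2 \<le> L \<Longrightarrow> 5 \<le> k \<Longrightarrow> \<not> double_fan k L e u u"
  unfolding double_fan_def cyc_adj_def fan_edge_def by auto

lemma inj_on_fan_order: "5 \<le> k \<Longrightarrow> 2 \<le> L \<Longrightarrow> L + 3 \<le> k \<Longrightarrow> inj_on (fan_order k L) (cyc_V k)"
  unfolding inj_on_def fan_order_def cyc_V_def by (auto split: if_splits)

lemma double_fan_earlier_neighbours:
  assumes k: "5 \<le> k" "2 \<le> L" "L + 3 \<le> k" and "u < k" "v < k"
    and "double_fan k L e v u" "fan_order k L u < fan_order k L v"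
  shows "(v = 0 \<and> (u = 1 \<or> u = L + 1))
    \<or> (2 \<le> v \<and> v \<le> L \<and> (u = v + 1 \<or> u = 1 \<or> (e \<and> v = L \<and> u = 0)))
    \<or> (L + 2 \<le> v \<and> (u = L + 1 \<or> (v + 1 < k \<and> u = v + 1) \<or> (v = k - 1 \<and> u = 0)))
    \<or> (v = L + 1 \<and> u = 1)"
  using assms unfolding double_fan_def cyc_adj_def fan_edge_def fan_order_def
  by (auto split: if_splits)

lemma double_fan_simplicial:
  assumes k: "5 \<le> k" "2 \<le> L" "L + 3 \<le> k" and uv: "u1 < k" "u2 < k" "v < k" "u1 \<noteq> u2"
    and d: "double_fan k L e v u1" "double_fan k L e v u2"
    and o: "fan_order k L u1 < fan_order k L v" "fan_order k L u2 < fan_order k L v"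
  shows "double_fan k L e u1 u2"
  using double_fan_earlier_neighbours[OF k uv(1,3) d(1) o(1)]
    double_fan_earlier_neighbours[OF k uv(2,3) d(2) o(2)] uv(4) k
  by (elim disjE conjE) (simp_all add: double_fan_def fan_edge_def cyc_adj_def)

lemma chordal_double_fan:
  assumes "5 \<le> k" "2 \<le> L" "L + 3 \<le> k"
  shows "chordal (cyc_V k) (rot_graph k s (double_fan k L e))"
  using assms double_fan_sym inj_on_fan_order double_fan_simplicial
  by (intro chordal_rot_graph[where \<sigma> = "fan_order k L"]) (auto simp: cyc_V_def)

lemma cyc_E_subset_double_fan:
  assumes "3 \<le> k"
  shows "cyc_E k \<subseteq> rot_graph k s (double_fan k L e)"
proof
  fix f assume "f \<in> cyc_E k"
  then obtain i j where ij: "f = {i, j}" "i < k" "j < k" "dC k i j = 1"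
    using cyc_E_elem assms by metis
  then have "dC k (unrot k s i) (unrot k s j) = 1" by (simp add: dC_unrot)
  then have "double_fan k L e (unrot k s i) (unrot k s j)"
    using dC_eq_1_iff assms by (simp add: double_fan_def unrot_less)
  with ij assms show "f \<in> rot_graph k s (double_fan k L e)"
    by (simp add: doubleton_in_rot_graph_iff double_fan_sym)
qed

lemma double_fan_edges_two_sets:
  assumes "5 \<le> k" "2 \<le> L"
  shows "\<forall>f\<in>rot_graph k s (double_fan k L e). \<exists>u v. f = {u, v} \<and> u \<in> cyc_V k \<and> v \<in> cyc_V k \<and> u \<noteq> v"
proof
  fix f assume "f \<in> rot_graph k s (double_fan k L e)"
  then obtain a b where ab: "a < k" "b < k" "double_fan k L e a b" "f = {rot k s a, rot k s b}"
    by (rule rot_graph_elem)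
  then have "rot k s a \<noteq> rot k s b" using double_fan_irrefl assms rot_inj by blast
  with ab assms show "\<exists>u v. f = {u, v} \<and> u \<in> cyc_V k \<and> v \<in> cyc_V k \<and> u \<noteq> v"
    by (intro exI[of _ "rot k s a"] exI[of _ "rot k s b"]) (auto simp: cyc_V_def rot_less)
qed

lemma double_fan_in_cyc_X:
  assumes "5 \<le> k" "2 \<le> L" "L + 3 \<le> k"
  shows "indicator (rot_graph k s (double_fan k L e) \<inter> cyc_nonedges k) \<in> cyc_X k"
  unfolding cyc_nonedges_def
  using assms chordal_double_fan cyc_E_subset_double_fan double_fan_edges_two_sets
  by (intro indicator_nonedges_in_X_set) auto

text \<open>The extra chord \<open>{0, L}\<close> is short only if \<open>L = 2\<close>, whence the hypothesis \<open>e \<longrightarrow> 3 \<le> L\<close>.\<close>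

lemma double_fan_short_chord:
  assumes k: "5 \<le> k" "2 \<le> L" "L + 3 \<le> k" and e: "e \<longrightarrow> 3 \<le> L" and uv: "u < k" "v < k"
    and "double_fan k L e u v" "dC k u v = 2"
  shows "{u, v} = {1, 3} \<or> {u, v} = {L + 1, (L + 3) mod k}"
proof -
  have dist2: "\<And>a b. a < k \<Longrightarrow> b < k \<Longrightarrow> dC k a b = 2
      \<Longrightarrow> b = a + 2 \<or> a = b + 2 \<or> b + k = a + 2 \<or> a + k = b + 2"
    using dC_eq_2_iff k(1) by blast
  have fan: "{a, b} = {1, 3} \<or> {a, b} = {L + 1, (L + 3) mod k}"
    if ab: "fan_edge k L e a b" "a < k" "b < k" "dC k a b = 2" for a b
  proof -
    note d = dist2[OF ab(2-4)]
    consider "a = 1" "3 \<le> b" "b \<le> L + 1" | "a = L + 1" "L + 3 \<le> b" | "a = L + 1" "b = 0"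
      | "a = L + 1" "b = 1" | "e" "a = 0" "b = L"
      using ab(1) unfolding fan_edge_def by blast
    then show ?thesis
    proof cases
      case 1
      with d k have "b = 3" by linarith
      with 1 show ?thesis by simp
    next
      case 2
      with d k ab(3) have "b = L + 3" by linarith
      with 2 ab(3) show ?thesis by simp
    next
      case 3
      with d k have "L + 3 = k" by linarith
      with 3 show ?thesis by simp
    next
      case 4
      with d k have "L = 2" by linarith
      with 4 show ?thesis by auto
    next
      case 5
      with d k e show ?thesis by linarith
    qed
  qed
  have "\<not> cyc_adj k u v" using dist2[OF uv \<open>dC k u v = 2\<close>] k uv unfolding cyc_adj_def by linarith
  with \<open>double_fan k L e u v\<close> consider "fan_edge k L e u v" | "fan_edge k L e v u"
    unfolding double_fan_def by blast
  then show ?thesis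
    using fan[of u v] fan[of v u] uv \<open>dC k u v = 2\<close> by cases (auto simp: dC_sym insert_commute)
qed

lemma double_fan_ears:
  assumes k: "5 \<le> k" "2 \<le> L" "L + 3 \<le> k"
  shows "double_fan k L e 1 3" "dC k 1 3 = 2"
    "double_fan k L e (L + 1) ((L + 3) mod k)" "dC k (L + 1) ((L + 3) mod k) = 2"
    "{1, 3} \<noteq> {L + 1, (L + 3) mod k}"
proof -
  have m: "(L + 3) mod k = (if L + 3 = k then 0 else L + 3)" using k by auto
  show "double_fan k L e 1 3" "dC k 1 3 = 2" using k by (simp_all add: double_fan_def fan_edge_def dC_def)
  show "double_fan k L e (L + 1) ((L + 3) mod k)" using k unfolding m
    by (simp add: double_fan_def fan_edge_def)
  show "dC k (L + 1) ((L + 3) mod k) = 2" using k unfolding m by (auto simp: dC_def)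
  show "{1, 3} \<noteq> {L + 1, (L + 3) mod k}" unfolding m using k by (auto simp: doubleton_eq_iff)
qed

lemma short_chords_inter_double_fan:
  assumes k: "5 \<le> k" "2 \<le> L" "L + 3 \<le> k" and e: "e \<longrightarrow> 3 \<le> L"
  shows "short_chords k \<inter> rot_graph k s (double_fan k L e)
    = {{rot k s 1, rot k s 3}, {rot k s (L + 1), rot k s ((L + 3) mod k)}}"
proof
  show "short_chords k \<inter> rot_graph k s (double_fan k L e)
      \<subseteq> {{rot k s 1, rot k s 3}, {rot k s (L + 1), rot k s ((L + 3) mod k)}}"
  proof
    fix f assume f: "f \<in> short_chords k \<inter> rot_graph k s (double_fan k L e)"
    then obtain i j where ij: "f = {i, j}" "i < k" "j < k" "dC k i j = 2"
      using short_chords_iff[of k f] k by auto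
    have "double_fan k L e (unrot k s i) (unrot k s j)"
      using f ij k by (simp add: doubleton_in_rot_graph_iff double_fan_sym)
    moreover have "unrot k s i < k" "unrot k s j < k" "dC k (unrot k s i) (unrot k s j) = 2"
      using ij k by (simp_all add: dC_unrot unrot_less)
    ultimately consider "{unrot k s i, unrot k s j} = {1, 3}"
      | "{unrot k s i, unrot k s j} = {L + 1, (L + 3) mod k}"
      using double_fan_short_chord[OF k e] by blast
    moreover have f_rot: "f = rot k s ` {unrot k s i, unrot k s j}" using ij by (simp add: rot_unrot)
    ultimately show "f \<in> {{rot k s 1, rot k s 3}, {rot k s (L + 1), rot k s ((L + 3) mod k)}}"
    proof cases
      case 1
      then have "f = rot k s ` {1, 3}" using f_rot by simp
      then show ?thesis by simp
    next
      case 2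
      then have "f = rot k s ` {L + 1, (L + 3) mod k}" using f_rot by simp
      then show ?thesis by simp
    qed
  qed
  have m: "(L + 3) mod k < k" using k by simp
  have "{rot k s 1, rot k s 3} \<in> rot_graph k s (double_fan k L e)"
    "{rot k s (L + 1), rot k s ((L + 3) mod k)} \<in> rot_graph k s (double_fan k L e)"
    using double_fan_ears(1,3)[OF k] k m by (auto intro: rot_graph_intro)
  moreover have "dC k (rot k s 1) (rot k s 3) = 2"
    "dC k (rot k s (L + 1)) (rot k s ((L + 3) mod k)) = 2"
    using double_fan_ears(2,4)[OF k] k m by (simp_all add: dC_rot)
  then have "{rot k s 1, rot k s 3} \<in> short_chords k"
    "{rot k s (L + 1), rot k s ((L + 3) mod k)} \<in> short_chords k"
    using k by (simp_all add: short_chordsI rot_less)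
  ultimately show "{{rot k s 1, rot k s 3}, {rot k s (L + 1), rot k s ((L + 3) mod k)}}
      \<subseteq> short_chords k \<inter> rot_graph k s (double_fan k L e)"
    by auto
qed

lemma double_fan_ears_distinct:
  assumes k: "5 \<le> k" "2 \<le> L" "L + 3 \<le> k"
  shows "{rot k s 1, rot k s 3} \<noteq> {rot k s (L + 1), rot k s ((L + 3) mod k)}"
proof -
  have "{1, 3} \<subseteq> cyc_V k" "{L + 1, (L + 3) mod k} \<subseteq> cyc_V k" using k by (auto simp: cyc_V_def)
  with double_fan_ears(5)[OF k] have "rot k s ` {1, 3} \<noteq> rot k s ` {L + 1, (L + 3) mod k}"
    using inj_on_image_eq_iff[OF inj_on_rot[of k s]] by blast
  then show ?thesis by simp
qed

lemma double_fan_on_face: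
  assumes k: "5 \<le> k" "2 \<le> L" "L + 3 \<le> k" and "e \<longrightarrow> 3 \<le> L"
  shows "(\<Sum>f\<in>short_chords k. indicator (rot_graph k s (double_fan k L e) \<inter> cyc_nonedges k) f) = (2::real)"
  using sum_indicator_cyc_nonedges[OF short_chords_subset, of "\<lambda>_. 1"]
    short_chords_inter_double_fan[OF assms] double_fan_ears_distinct[OF k]
  by simp

lemma rot_graph_double_fan_True:
  assumes "L < k"
  shows "rot_graph k s (double_fan k L True)
    = insert {rot k s 0, rot k s L} (rot_graph k s (double_fan k L False))"
proof -
  have True_iff: "double_fan k L True u v
      \<longleftrightarrow> double_fan k L False u v \<or> (u = 0 \<and> v = L) \<or> (u = L \<and> v = 0)" for u v
    by (auto simp: double_fan_def fan_edge_def)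
  show ?thesis
  proof
    show "rot_graph k s (double_fan k L True)
        \<subseteq> insert {rot k s 0, rot k s L} (rot_graph k s (double_fan k L False))"
      by (auto elim!: rot_graph_elem intro: rot_graph_intro simp: True_iff insert_commute)
    show "insert {rot k s 0, rot k s L} (rot_graph k s (double_fan k L False))
        \<subseteq> rot_graph k s (double_fan k L True)"
      using assms by (auto elim!: rot_graph_elem intro!: rot_graph_intro simp: True_iff)
  qed
qed

lemma chord_notin_double_fan:
  assumes "5 \<le> k" "3 \<le> L" "L + 3 \<le> k"
  shows "{rot k s 0, rot k s L} \<notin> rot_graph k s (double_fan k L False)"
proof
  assume "{rot k s 0, rot k s L} \<in> rot_graph k s (double_fan k L False)"
  then have "double_fan k L False (unrot k s (rot k s 0)) (unrot k s (rot k s L))"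
    using assms by (simp add: doubleton_in_rot_graph_iff double_fan_sym rot_less)
  then have "double_fan k L False 0 L" using assms by (simp add: unrot_rot)
  then show False using assms by (auto simp: double_fan_def fan_edge_def cyc_adj_def)
qed

definition holds_on_face :: "nat \<Rightarrow> (nat set \<Rightarrow> real) \<Rightarrow> real \<Rightarrow> bool" where
  "holds_on_face k a b \<longleftrightarrow>
    (\<forall>x\<in>cyc_X k. (\<Sum>f\<in>short_chords k. x f) = 2 \<longrightarrow> (\<Sum>f\<in>cyc_nonedges k. a f * x f) = b)"

lemma holds_on_face_double_fan:
  assumes "holds_on_face k a b" "5 \<le> k" "2 \<le> L" "L + 3 \<le> k" "e \<longrightarrow> 3 \<le> L"
  shows "(\<Sum>f\<in>cyc_nonedges k \<inter> rot_graph k s (double_fan k L e). a f) = b"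
proof -
  have "indicator (rot_graph k s (double_fan k L e) \<inter> cyc_nonedges k) \<in> cyc_X k"
    using assms by (intro double_fan_in_cyc_X) auto
  with assms double_fan_on_face[of k L e s]
  have "(\<Sum>f\<in>cyc_nonedges k. a f * indicator (rot_graph k s (double_fan k L e) \<inter> cyc_nonedges k) f) = b"
    unfolding holds_on_face_def by blast
  then show ?thesis by (simp add: sum_indicator_cyc_nonedges[OF order_refl])
qed

lemma holds_on_face_coeff_long_chord:
  assumes k: "5 \<le> k" and face: "holds_on_face k a b"
    and f: "f \<in> cyc_nonedges k" "f \<notin> short_chords k"
  shows "a f = 0"
proof -
  obtain i0 j0 where ij0: "f = {i0, j0}" "i0 < k" "j0 < k" "2 \<le> dC k i0 j0"
    using f(1) k cyc_nonedges_iff[of k f] by auto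
  have "dC k i0 j0 \<noteq> 2" using f(2) ij0 short_chordsI[of k i0 j0] k by auto
  have "i0 \<noteq> j0" using ij0 by (auto simp: dC_def)
  obtain i j where ij: "f = {i, j}" "i < j" "j < k" "3 \<le> dC k i j"
  proof (cases "i0 < j0")
    case True
    then show ?thesis using that[of i0 j0] ij0 \<open>dC k i0 j0 \<noteq> 2\<close> by auto
  next
    case False
    then show ?thesis using that[of j0 i0] ij0 \<open>dC k i0 j0 \<noteq> 2\<close> \<open>i0 \<noteq> j0\<close>
      by (auto simp: insert_commute dC_sym)
  qed
  define L where "L = j - i"
  have L: "3 \<le> L" "L + 3 \<le> k" using ij by (auto simp: L_def dC_def min_def split: if_splits)
  define H0 where "H0 = rot_graph k i (double_fan k L False)"
  have "f = {rot k i 0, rot k i L}" using ij by (simp add: rot_def L_def)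
  then have "rot_graph k i (double_fan k L True) = insert f H0" and "f \<notin> H0"
    using rot_graph_double_fan_True[of L k i] chord_notin_double_fan[of k L i] k L
    by (simp_all add: H0_def)
  moreover have "(\<Sum>g\<in>cyc_nonedges k \<inter> rot_graph k i (double_fan k L e). a g) = b" for e
    using holds_on_face_double_fan[OF face k] L by simp
  ultimately have "(\<Sum>g\<in>insert f (cyc_nonedges k \<inter> H0). a g) = (\<Sum>g\<in>cyc_nonedges k \<inter> H0. a g)"
    using f(1) by (metis H0_def Int_insert_right_if1)
  then show ?thesis using \<open>f \<notin> H0\<close> finite_cyc_nonedges by simp
qed

text \<open>Since \<open>rot k u (k - 1)\<close> is \<open>u - 1\<close> modulo \<open>k\<close>, this is the coefficient of the short chord
  \<open>{u - 1, u + 1}\<close>.\<close>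

definition ear_coeff :: "nat \<Rightarrow> (nat set \<Rightarrow> real) \<Rightarrow> nat \<Rightarrow> real" where
  "ear_coeff k a u = a {rot k u (k - 1), rot k u 1}"

lemma ear_coeff_add_self: "ear_coeff k a (u + k) = ear_coeff k a u"
  by (simp add: ear_coeff_def rot_add_self_left)

lemma short_chord_ear:
  assumes k: "5 \<le> k" and "f \<in> short_chords k"
  obtains u where "f = {rot k u (k - 1), rot k u 1}"
proof -
  obtain i j where ij: "f = {i, j}" "i < k" "j < k" "dC k i j = 2"
    using assms short_chords_iff by fastforce
  have centre: "rot k (i + 1) (k - 1) = i" "rot k (j + 1) (k - 1) = j"
    using ij k by (simp_all add: rot_def)
  consider "j = i + 2 \<or> j + k = i + 2" | "i = j + 2 \<or> i + k = j + 2"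
    using ij dC_eq_2_iff k by blast
  then show ?thesis
  proof cases
    case 1
    then have "(i + 2) mod k = j" using ij by (metis mod_add_self2 mod_less)
    then have "rot k (i + 1) 1 = j" by (simp add: rot_def add.commute)
    with centre ij that[of "i + 1"] show ?thesis by simp
  next
    case 2
    then have "(j + 2) mod k = i" using ij by (metis mod_add_self2 mod_less)
    then have "rot k (j + 1) 1 = i" by (simp add: rot_def add.commute)
    with centre ij that[of "j + 1"] show ?thesis by (simp add: insert_commute)
  qed
qed

lemma double_fan_value:
  assumes k: "5 \<le> k" "2 \<le> L" "L + 3 \<le> k" and zero: "\<forall>f\<in>cyc_nonedges k - short_chords k. a f = 0"
  shows "(\<Sum>f\<in>cyc_nonedges k \<inter> rot_graph k s (double_fan k L False). a f)
    = ear_coeff k a (s + 2) + ear_coeff k a (s + L + 2)"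
proof -
  define H where "H = rot_graph k s (double_fan k L False)"
  have split: "cyc_nonedges k \<inter> H = (short_chords k \<inter> H) \<union> ((cyc_nonedges k - short_chords k) \<inter> H)"
    using short_chords_subset by auto
  have "(\<Sum>f\<in>cyc_nonedges k \<inter> H. a f)
      = (\<Sum>f\<in>short_chords k \<inter> H. a f) + (\<Sum>f\<in>(cyc_nonedges k - short_chords k) \<inter> H. a f)"
    unfolding split using finite_cyc_nonedges finite_short_chords by (intro sum.union_disjoint) auto
  also have "(\<Sum>f\<in>(cyc_nonedges k - short_chords k) \<inter> H. a f) = 0"
    using zero by (intro sum.neutral) auto
  also have "(\<Sum>f\<in>short_chords k \<inter> H. a f)
      = a {rot k s 1, rot k s 3} + a {rot k s (L + 1), rot k s ((L + 3) mod k)}"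
  proof -
    have "short_chords k \<inter> H = {{rot k s 1, rot k s 3}, {rot k s (L + 1), rot k s ((L + 3) mod k)}}"
      unfolding H_def by (rule short_chords_inter_double_fan[OF k]) simp
    with double_fan_ears_distinct[OF k, of s] show ?thesis by simp
  qed
  also have "{rot k s 1, rot k s 3} = {rot k (s + 2) (k - 1), rot k (s + 2) 1}"
    using k rot_shift[of k s 2 "k - 1"] rot_add_self[of k s 1] rot_shift[of k s 2 1]
    by (simp add: numeral_3_eq_3)
  also have "{rot k s (L + 1), rot k s ((L + 3) mod k)}
      = {rot k (s + L + 2) (k - 1), rot k (s + L + 2) 1}"
    using k rot_shift[of k s "L + 2" "k - 1"] rot_add_self[of k s "L + 1"]
      rot_shift[of k s "L + 2" 1] rot_mod[of k s "L + 3"]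
    by (simp add: add.assoc add.commute numeral_3_eq_3)
  finally show ?thesis by (simp add: H_def ear_coeff_def)
qed

lemma ear_coeff_step:
  assumes k: "5 \<le> k" and face: "holds_on_face k a b"
    and zero: "\<forall>f\<in>cyc_nonedges k - short_chords k. a f = 0"
  shows "ear_coeff k a u = ear_coeff k a (u + 1)"
proof -
  have S: "ear_coeff k a (s + 2) + ear_coeff k a (s + L + 2) = b" if "2 \<le> L" "L + 3 \<le> k" for s L
    using holds_on_face_double_fan[OF face k that, of False s] double_fan_value[OF k that zero]
    by simp
  show ?thesis
  proof (cases "k = 5")
    case True
    have "u + 1 + 2 = u + 3" "u + 1 + 2 + 2 = u + k"
      "u + 4 + 2 = (u + 1) + k" "u + 4 + 2 + 2 = (u + 3) + k"
      using True by auto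
    then have "ear_coeff k a (u + 3) + ear_coeff k a u = b"
      "ear_coeff k a (u + 1) + ear_coeff k a (u + 3) = b"
      using S[of 2 "u + 1"] S[of 2 "u + 4"] True by (simp_all only: ear_coeff_add_self)
    then show ?thesis by simp
  next
    case False
    with k have "6 \<le> k" by simp
    have "u + (k - 2) + 2 = u + k" "u + (k - 2) + 3 + 2 = (u + 3) + k"
      "u + (k - 1) + 2 = (u + 1) + k" "u + (k - 1) + 2 + 2 = (u + 3) + k"
      using \<open>6 \<le> k\<close> by auto
    then have "ear_coeff k a u + ear_coeff k a (u + 3) = b"
      "ear_coeff k a (u + 1) + ear_coeff k a (u + 3) = b"
      using S[of 3 "u + (k - 2)"] S[of 2 "u + (k - 1)"] \<open>6 \<le> k\<close> by (simp_all only: ear_coeff_add_self)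
    then show ?thesis by simp
  qed
qed

text \<open>Normalising the coefficient of \<open>{k - 1, 1}\<close> to zero removes the multiples of the
  inequality itself.\<close>

lemma holds_on_face_trivial:
  assumes k: "5 \<le> k" and face: "holds_on_face k a b" and "a {k - 1, 1} = 0"
  shows "(\<forall>f\<in>cyc_nonedges k. a f = 0) \<and> b = 0"
proof -
  have zero: "\<forall>f\<in>cyc_nonedges k - short_chords k. a f = 0"
    using holds_on_face_coeff_long_chord[OF k face] by blast
  have ear_const: "ear_coeff k a u = ear_coeff k a 0" for u
  proof (induction u)
    case (Suc u)
    then show ?case using ear_coeff_step[OF k face zero, of u] by simp
  qed simp
  have "ear_coeff k a 0 = 0" using k \<open>a {k - 1, 1} = 0\<close> by (simp add: ear_coeff_def rot_def)
  have "a f = 0" if f: "f \<in> short_chords k" for f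
  proof -
    obtain u where "f = {rot k u (k - 1), rot k u 1}" using short_chord_ear[OF k f] .
    then have "a f = ear_coeff k a u" by (simp add: ear_coeff_def)
    with ear_const \<open>ear_coeff k a 0 = 0\<close> show ?thesis by simp
  qed
  with zero have "\<forall>f\<in>cyc_nonedges k. a f = 0" by blast
  moreover have "(\<Sum>f\<in>cyc_nonedges k \<inter> rot_graph k 0 (double_fan k 2 False). a f) = b"
    using k by (intro holds_on_face_double_fan[OF face]) auto
  ultimately show ?thesis by simp
qed

lemma adim_face:
  assumes k: "5 \<le> k"
  shows "adim (conv (cyc_X k) \<inter> {x. (\<Sum>f\<in>short_chords k. x f) = 2}) = int (card (cyc_nonedges k)) - 1"
proof (rule adim_eqI)
  have g0: "{k - 1, 1} \<in> short_chords k" using k by (intro short_chordsI) (auto simp: dC_def)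
  show "\<forall>T\<subseteq>conv (cyc_X k) \<inter> {x. (\<Sum>f\<in>short_chords k. x f) = 2}.
      aff_indep T \<longrightarrow> card T \<le> card (cyc_nonedges k)"
    using aff_indep_card_le_hyperplane[OF finite_cyc_nonedges _ _ short_chords_subset]
      conv_cyc_X_supported g0 by blast
  show "{x \<in> cyc_X k. (\<Sum>f\<in>short_chords k. x f) = 2}
      \<subseteq> conv (cyc_X k) \<inter> {x. (\<Sum>f\<in>short_chords k. x f) = 2}"
    using subset_conv by blast
  have "\<exists>T\<subseteq>{x \<in> cyc_X k. (\<Sum>f\<in>short_chords k. x f) = 2}.
      aff_indep T \<and> card (cyc_nonedges k) + 1 \<le> card T + card {{k - 1, 1}}"
  proof (rule aff_indep_card_ge[OF finite_cyc_nonedges])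
    show "{{k - 1, 1}} \<subseteq> cyc_nonedges k" using g0 short_chords_subset by blast
    show "\<forall>y\<in>{x \<in> cyc_X k. (\<Sum>f\<in>short_chords k. x f) = 2}. \<forall>f. f \<notin> cyc_nonedges k \<longrightarrow> y f = 0"
      using subset_conv conv_cyc_X_supported by blast
    fix a b assume "\<forall>x\<in>{x \<in> cyc_X k. (\<Sum>f\<in>short_chords k. x f) = 2}. (\<Sum>f\<in>cyc_nonedges k. a f * x f) = b"
      and "\<forall>f\<in>{{k - 1, 1}}. a f = 0"
    then have "holds_on_face k a b" "a {k - 1, 1} = 0" unfolding holds_on_face_def by auto
    with holds_on_face_trivial[OF k] show "(\<forall>f\<in>cyc_nonedges k. a f = 0) \<and> b = 0" by blast
  qed simp
  then show "\<exists>T\<subseteq>{x \<in> cyc_X k. (\<Sum>f\<in>short_chords k. x f) = 2}.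
      aff_indep T \<and> card (cyc_nonedges k) \<le> card T"
    by simp
qed

theorem proposition4:
  fixes k :: nat
  assumes "k \<ge> 5"
  defines "D \<equiv> {f \<in> nonedges (cyc_V k) (cyc_E k).
                  \<exists>i j. i \<in> cyc_V k \<and> j \<in> cyc_V k \<and> f = {i, j} \<and> dC k i j = 2}"
      and "P \<equiv> conv (X_set (cyc_V k) (cyc_E k))"
  shows "(\<forall>x \<in> P. (\<Sum>f\<in>D. x f) \<ge> 2)
         \<and> adim (P \<inter> {x. (\<Sum>f\<in>D. x f) = 2}) = adim P - 1"
proof -
  have k: "5 \<le> k" and D: "D = short_chords k" and P: "P = conv (cyc_X k)"
    using assms by (simp_all add: short_chords_def)
  have "\<forall>x\<in>P. 2 \<le> (\<Sum>f\<in>D. x f)"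
    using conv_sum_ge short_chords_sum_ge_2[OF k] unfolding P D by blast
  moreover have "adim P = int (card (cyc_nonedges k))"
    using adim_conv_cyc_X k unfolding P by simp
  moreover have "adim (P \<inter> {x. (\<Sum>f\<in>D. x f) = 2}) = int (card (cyc_nonedges k)) - 1"
    using adim_face[OF k] unfolding P D .
  ultimately show ?thesis by simp
qed

end
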